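(* Let $G$ be an interval graph and let $[C_1,\ldots,C_t]$ be a consecutive clique arrangement of $G$ with $|C_1|\ge 3$. For a vertex $v$ let $r(v)=\max\{i : v\in C_i\}$, order the vertices of $C_1$ by nondecreasing $r(v)$, and let $\alpha,\beta,\gamma$ be the first three vertices of $C_1$ in this ordering. If $\mathcal{P}$ is a triangle packing of $G$ in which $\alpha$ is covered by a triangle, then there is a triangle packing $\mathcal{P}'$ of $G$ with $|\mathcal{P}'|=|\mathcal{P}|$ such that $\{\alpha,\beta,\gamma\}$ is one of the triangles of $\mathcal{P}'$.
   Context: A graph is an interval graph if it is the intersection graph of a finite collection of intervals on the real line. A consecutive clique arrangement of a graph $G$ is a linear ordering $[C_1,\ldots,C_t]$ of all maximal cliques of $G$ such that for each vertex $v$, the cliques containing $v$ are consecutive in the ordering. A triangle packing is a collection of pairwise vertex-disjoint triangles. *)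

theory Defs
  imports Complex_Main
begin

definition simple_graph :: "'a set \<Rightarrow> ('a \<Rightarrow> 'a \<Rightarrow> bool) \<Rightarrow> bool" where
  "simple_graph V E \<longleftrightarrow> finite V \<and> (\<forall>u v. E u v \<longrightarrow> E v u) \<and> (\<forall>v. \<not> E v v)
     \<and> (\<forall>u v. E u v \<longrightarrow> u \<in> V \<and> v \<in> V)"

definition interval_graph :: "'a set \<Rightarrow> ('a \<Rightarrow> 'a \<Rightarrow> bool) \<Rightarrow> bool" where
  "interval_graph V E \<longleftrightarrow> simple_graph V E \<and>
     (\<exists>l r :: 'a \<Rightarrow> real. (\<forall>v\<in>V. l v \<le> r v) \<and>
        (\<forall>u\<in>V. \<forall>v\<in>V. u \<noteq> v \<longrightarrow> (E u v \<longleftrightarrow> {l u..r u} \<inter> {l v..r v} \<noteq> {})))"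

definition is_clique :: "'a set \<Rightarrow> ('a \<Rightarrow> 'a \<Rightarrow> bool) \<Rightarrow> 'a set \<Rightarrow> bool" where
  "is_clique V E C \<longleftrightarrow> C \<subseteq> V \<and> (\<forall>u\<in>C. \<forall>v\<in>C. u \<noteq> v \<longrightarrow> E u v)"

definition maximal_clique :: "'a set \<Rightarrow> ('a \<Rightarrow> 'a \<Rightarrow> bool) \<Rightarrow> 'a set \<Rightarrow> bool" where
  "maximal_clique V E C \<longleftrightarrow> is_clique V E C \<and> (\<forall>D. is_clique V E D \<and> C \<subseteq> D \<longrightarrow> D = C)"

definition consecutive_clique_arrangement ::
  "'a set \<Rightarrow> ('a \<Rightarrow> 'a \<Rightarrow> bool) \<Rightarrow> 'a set list \<Rightarrow> bool" where
  "consecutive_clique_arrangement V E Cs \<longleftrightarrow>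
     distinct Cs \<and> set Cs = {C. maximal_clique V E C} \<and>
     (\<forall>v\<in>V. \<forall>i j k. i \<le> j \<and> j \<le> k \<and> k < length Cs \<and> v \<in> Cs ! i \<and> v \<in> Cs ! k
                \<longrightarrow> v \<in> Cs ! j)"

text \<open>r(v) = max index of a clique containing v (0-indexed).\<close>
definition rmax :: "'a set list \<Rightarrow> 'a \<Rightarrow> nat" where
  "rmax Cs v = Max {i. i < length Cs \<and> v \<in> Cs ! i}"

definition is_triangle :: "'a set \<Rightarrow> ('a \<Rightarrow> 'a \<Rightarrow> bool) \<Rightarrow> 'a set \<Rightarrow> bool" where
  "is_triangle V E T \<longleftrightarrow> card T = 3 \<and> is_clique V E T"

definition triangle_packing :: "'a set \<Rightarrow> ('a \<Rightarrow> 'a \<Rightarrow> bool) \<Rightarrow> 'a set set \<Rightarrow> bool" where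
  "triangle_packing V E P \<longleftrightarrow> (\<forall>T\<in>P. is_triangle V E T) \<and>
     (\<forall>T\<in>P. \<forall>T'\<in>P. T \<noteq> T' \<longrightarrow> T \<inter> T' = {})"

end

theory Submission
  imports Defs "HOL-Combinatorics.Transposition"
begin

(* Write C for the first clique Cs ! 0 and r for rmax Cs.
   (1) Some vertex of C has r = 0: otherwise C would be contained in the next
       clique of the arrangement, contradicting maximality and distinctness.
       Hence alpha, having the least r-value in C, satisfies r(alpha) = 0, so
       all neighbours of alpha lie in C and every triangle through alpha lies
       inside C.
   (2) For u, x in C with r(u) <= r(x), the vertex x dominates u: any clique
       containing u has index at most r(u), so by consecutiveness it also
       contains x.  Therefore exchanging u and x (the transposition (u x)
       applied to every triangle) turns a triangle packing into a triangle
       packing of the same size.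
   (3) Starting from the triangle through alpha, two such exchanges first pull
       beta and then gamma into it, producing the triangle {alpha, beta, gamma}.
   Only the consecutive clique arrangement of a (finite, simple) graph is used;
   the interval representation itself plays no further role. *)

lemma clique_subset: "is_clique V E C \<Longrightarrow> D \<subseteq> C \<Longrightarrow> is_clique V E D"
  unfolding is_clique_def by blast

text \<open>In a finite graph every clique extends to a maximal one: take a largest
  clique containing it.\<close>

lemma maximal_clique_exists:
  assumes fin: "finite V" and K: "is_clique V E K"
  shows "\<exists>C. maximal_clique V E C \<and> K \<subseteq> C"
proof -
  define S where "S = {D. is_clique V E D \<and> K \<subseteq> D}"
  have finS: "finite S" unfolding S_def is_clique_def
    by (rule finite_subset[of _ "Pow V"]) (use fin in auto)
  have "K \<in> S" using K unfolding S_def by auto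
  then have "Max (card ` S) \<in> card ` S" using finS by (intro Max_in) auto
  then obtain D where D: "D \<in> S" "card D = Max (card ` S)" by auto
  have "maximal_clique V E D"
    unfolding maximal_clique_def
  proof (intro conjI allI impI)
    show "is_clique V E D" using D S_def by auto
    fix D' assume D': "is_clique V E D' \<and> D \<subseteq> D'"
    then have "card D' \<le> card D" using D finS unfolding S_def by auto
    moreover have "finite D'" using D' fin unfolding is_clique_def by (auto intro: finite_subset)
    ultimately show "D' = D" using D' by (metis card_subset_eq card_mono antisym)
  qed
  then show ?thesis using D S_def by auto
qed

lemma triangle_edge: "is_triangle V E T \<Longrightarrow> a \<in> T \<Longrightarrow> b \<in> T \<Longrightarrow> a \<noteq> b \<Longrightarrow> E a b"
  unfolding is_triangle_def is_clique_def by simp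

lemma card3_avoids_two:
  assumes "card T = 3"
  shows "\<exists>x\<in>T. x \<noteq> a \<and> x \<noteq> b"
proof (rule ccontr)
  assume "\<not> ?thesis"
  then have "card T \<le> card {a, b}" by (intro card_mono) auto
  also have "\<dots> \<le> 2" by (simp add: card_insert_if)
  finally show False using assms by simp
qed

lemma card3_eq:
  assumes "card T = 3" and "{a, b, c} \<subseteq> T" and "a \<noteq> b" "a \<noteq> c" "b \<noteq> c"
  shows "T = {a, b, c}"
proof -
  have "finite T" using assms(1) by (metis card.infinite zero_neq_numeral)
  moreover have "card {a, b, c} = card T" using assms by simp
  ultimately show ?thesis using assms(2) by (metis card_subset_eq)
qed

section \<open>Exchanging a dominated vertex in a triangle packing\<close>

lemma transpose_image_exchange:
  assumes "x \<in> T" and "u \<notin> T"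
  shows "transpose u x ` T = insert u (T - {x})"
proof
  show "transpose u x ` T \<subseteq> insert u (T - {x})"
    using assms by (auto simp: transpose_def)
  show "insert u (T - {x}) \<subseteq> transpose u x ` T"
    using assms by (auto simp: in_transpose_image_iff transpose_def)
qed

lemma triangle_packing_image:
  assumes P: "triangle_packing V E P" and inj: "inj f"
    and tri: "\<And>T. T \<in> P \<Longrightarrow> is_triangle V E (f ` T)"
  shows "triangle_packing V E ((`) f ` P) \<and> card ((`) f ` P) = card P"
proof
  have "f ` A \<inter> f ` B = {}" if "A \<in> P" "B \<in> P" "f ` A \<noteq> f ` B" for A B
  proof -
    have "A \<noteq> B" using that(3) by blast
    then have "A \<inter> B = {}" using P that(1,2) unfolding triangle_packing_def by blast
    then show ?thesis using inj by (simp add: image_Int[symmetric])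
  qed
  then show "triangle_packing V E ((`) f ` P)"
    using tri unfolding triangle_packing_def by blast
  have "inj_on ((`) f) P" using inj by (simp add: inj_on_def inj_image_eq_iff)
  then show "card ((`) f ` P) = card P" by (rule card_image)
qed

lemma transpose_dominated_triangle:
  assumes dom: "\<And>w. E u w \<Longrightarrow> w = x \<or> E x w" and sym: "\<And>a b. E a b \<Longrightarrow> E b a"
    and xV: "x \<in> V" and T: "is_triangle V E T" and xT: "x \<notin> T"
  shows "is_triangle V E (transpose u x ` T)"
proof (cases "u \<in> T")
  case False
  then show ?thesis using T xT by simp
next
  case True
  have img: "transpose u x ` T = insert x (T - {u})"
    using transpose_image_exchange[OF True xT] transpose_commute[of u x] by simp
  have "E x w" if "w \<in> T - {u}" for w
  proof -
    have "E u w" using T True that unfolding is_triangle_def is_clique_def by auto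
    then show ?thesis using dom xT that by blast
  qed
  then have "is_clique V E (insert x (T - {u}))"
    using T xV sym unfolding is_triangle_def is_clique_def by auto
  moreover have "card (transpose u x ` T) = 3"
    using T by (simp add: card_image is_triangle_def)
  ultimately show ?thesis using img unfolding is_triangle_def by simp
qed

lemma exchange_dominated_vertex:
  assumes sym: "\<And>a b. E a b \<Longrightarrow> E b a"
    and P: "triangle_packing V E P" and T0: "T0 \<in> P" "x \<in> T0" "u \<notin> T0"
    and cl: "is_clique V E (insert u (T0 - {x}))"
    and dom: "\<And>w. E u w \<Longrightarrow> w = x \<or> E x w"
  shows "\<exists>P'. triangle_packing V E P' \<and> card P' = card P \<and> insert u (T0 - {x}) \<in> P'"
proof -
  let ?f = "transpose u x"
  have T0tri: "is_triangle V E T0" using P T0 unfolding triangle_packing_def by auto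
  then have xV: "x \<in> V" using T0 unfolding is_triangle_def is_clique_def by auto
  have img0: "?f ` T0 = insert u (T0 - {x})" using T0(2,3) by (rule transpose_image_exchange)
  have "is_triangle V E (?f ` T)" if T: "T \<in> P" for T
  proof (cases "T = T0")
    case True
    have "card (?f ` T0) = 3" using T0tri by (simp add: card_image is_triangle_def)
    then show ?thesis using True img0 cl unfolding is_triangle_def by simp
  next
    case False
    have "is_triangle V E T" using P T unfolding triangle_packing_def by auto
    moreover have "x \<notin> T" using P T T0 False unfolding triangle_packing_def by blast
    ultimately show ?thesis using transpose_dominated_triangle[of E u x, OF dom sym xV] by blast
  qed
  then have "triangle_packing V E ((`) ?f ` P) \<and> card ((`) ?f ` P) = card P"
    by (rule triangle_packing_image[OF P inj_transpose])
  moreover have "insert u (T0 - {x}) \<in> (`) ?f ` P" using img0 T0 by blast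
  ultimately show ?thesis by blast
qed

section \<open>Consequences of a consecutive clique arrangement\<close>

locale clique_arrangement =
  fixes V :: "'a set" and E :: "'a \<Rightarrow> 'a \<Rightarrow> bool" and Cs :: "'a set list"
  assumes graph: "simple_graph V E"
    and arrangement: "consecutive_clique_arrangement V E Cs"
    and nonempty: "Cs \<noteq> []"
begin

lemma symmetric: "E a b \<Longrightarrow> E b a"
  using graph unfolding simple_graph_def by blast

lemma clique_nth: "i < length Cs \<Longrightarrow> is_clique V E (Cs ! i)"
  using arrangement nth_mem
  unfolding consecutive_clique_arrangement_def maximal_clique_def by fastforce

lemma first_clique_maximal: "maximal_clique V E (Cs ! 0)"
  using arrangement nonempty unfolding consecutive_clique_arrangement_def by auto

lemma first_clique_clique: "is_clique V E (Cs ! 0)"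
  using first_clique_maximal unfolding maximal_clique_def by simp

lemma consecutive:
  assumes "v \<in> Cs ! i" "v \<in> Cs ! k" "i \<le> j" "j \<le> k" "k < length Cs"
  shows "v \<in> Cs ! j"
proof -
  have "v \<in> V" using clique_nth[of k] assms unfolding is_clique_def by auto
  then show ?thesis
    using arrangement assms unfolding consecutive_clique_arrangement_def by blast
qed

lemma edge_in_some_clique:
  assumes "E a b"
  shows "\<exists>i<length Cs. a \<in> Cs ! i \<and> b \<in> Cs ! i"
proof -
  have "a \<in> V" "b \<in> V" using assms graph unfolding simple_graph_def by blast+
  then have "is_clique V E {a, b}"
    using assms symmetric unfolding is_clique_def by auto
  moreover have "finite V" using graph unfolding simple_graph_def by simp
  ultimately obtain C where "maximal_clique V E C" "{a, b} \<subseteq> C"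
    using maximal_clique_exists by blast
  moreover have "set Cs = {C. maximal_clique V E C}"
    using arrangement unfolding consecutive_clique_arrangement_def by simp
  ultimately show ?thesis by (metis in_set_conv_nth insert_subset mem_Collect_eq)
qed

lemma rmax_ge: "i < length Cs \<Longrightarrow> v \<in> Cs ! i \<Longrightarrow> i \<le> rmax Cs v"
  unfolding rmax_def by (rule Max_ge) auto

lemma rmax_clique:
  assumes "v \<in> Cs ! 0"
  shows "rmax Cs v < length Cs \<and> v \<in> Cs ! rmax Cs v"
proof -
  have "rmax Cs v \<in> {i. i < length Cs \<and> v \<in> Cs ! i}"
    unfolding rmax_def by (rule Max_in) (use assms nonempty in auto)
  then show ?thesis by simp
qed

text \<open>Some vertex of the first clique lies in no other clique: otherwise, by
  consecutiveness, the first clique would be contained in the second one.\<close>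

lemma first_clique_private_vertex:
  assumes "Cs ! 0 \<noteq> {}"
  shows "\<exists>v\<in>Cs ! 0. rmax Cs v = 0"
proof (rule ccontr)
  assume "\<not> ?thesis"
  then have later: "0 < rmax Cs v" if "v \<in> Cs ! 0" for v using that by auto
  obtain v0 where "v0 \<in> Cs ! 0" using assms by blast
  then have two: "1 < length Cs" using later rmax_clique by fastforce
  have "Cs ! 0 \<subseteq> Cs ! 1"
  proof
    fix v assume v: "v \<in> Cs ! 0"
    have "1 \<le> rmax Cs v" using later[OF v] by simp
    then show "v \<in> Cs ! 1" using consecutive[of v 0 "rmax Cs v" 1] v rmax_clique[OF v] by simp
  qed
  then have "Cs ! 1 = Cs ! 0"
    using first_clique_maximal clique_nth[OF two] unfolding maximal_clique_def by blast
  moreover have "distinct Cs"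
    using arrangement unfolding consecutive_clique_arrangement_def by simp
  ultimately show False using two nth_eq_iff_index_eq[of Cs 1 0] nonempty by simp
qed

lemma least_rmax_private:
  assumes a: "a \<in> Cs ! 0" and least: "\<And>v. v \<in> Cs ! 0 \<Longrightarrow> rmax Cs a \<le> rmax Cs v"
  shows "rmax Cs a = 0"
proof -
  obtain v0 where "v0 \<in> Cs ! 0" "rmax Cs v0 = 0"
    using first_clique_private_vertex a by blast
  then show ?thesis using least[of v0] by simp
qed

lemma private_vertex_neighbours:
  assumes "rmax Cs v = 0" and "E v w"
  shows "w \<in> Cs ! 0"
proof -
  obtain i where i: "i < length Cs" "v \<in> Cs ! i" "w \<in> Cs ! i"
    using edge_in_some_clique[OF assms(2)] by blast
  have "i = 0" using rmax_ge[OF i(1,2)] assms(1) by simp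
  then show ?thesis using i(3) by simp
qed

lemma triangle_through_private_vertex:
  assumes "is_triangle V E T" and "v \<in> T" and "v \<in> Cs ! 0" and "rmax Cs v = 0"
  shows "T \<subseteq> Cs ! 0"
proof
  fix w assume "w \<in> T"
  show "w \<in> Cs ! 0"
  proof (cases "w = v")
    case False
    then have "E v w" using triangle_edge[OF assms(1,2) \<open>w \<in> T\<close>] by simp
    with assms(4) show ?thesis by (rule private_vertex_neighbours)
  qed (use assms(3) in simp)
qed

text \<open>Among vertices of the first clique, one with a larger r-value dominates
  one with a smaller r-value: every clique through u also contains v.\<close>

lemma first_clique_domination:
  assumes u: "u \<in> Cs ! 0" and v: "v \<in> Cs ! 0" and r: "rmax Cs u \<le> rmax Cs v"
    and "E u w"
  shows "w = v \<or> E v w"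
proof -
  obtain i where i: "i < length Cs" "u \<in> Cs ! i" "w \<in> Cs ! i"
    using edge_in_some_clique[OF \<open>E u w\<close>] by blast
  have "i \<le> rmax Cs v" using rmax_ge[OF i(1,2)] r by simp
  then have "v \<in> Cs ! i" using consecutive[of v 0 "rmax Cs v" i] v rmax_clique[OF v] by simp
  moreover have "\<forall>a\<in>Cs ! i. \<forall>b\<in>Cs ! i. a \<noteq> b \<longrightarrow> E a b"
    using clique_nth[OF i(1)] unfolding is_clique_def by simp
  ultimately show ?thesis using i(3) by metis
qed

lemma exchange_in_first_clique:
  assumes P: "triangle_packing V E P" and T: "T \<in> P" "T \<subseteq> Cs ! 0"
    and x: "x \<in> T" and u: "u \<in> Cs ! 0" "u \<notin> T" and r: "rmax Cs u \<le> rmax Cs x"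
  shows "\<exists>P'. triangle_packing V E P' \<and> card P' = card P \<and> insert u (T - {x}) \<in> P'"
proof (rule exchange_dominated_vertex[OF symmetric P T(1) x u(2)])
  have "insert u (T - {x}) \<subseteq> Cs ! 0" using T(2) u(1) by blast
  then show "is_clique V E (insert u (T - {x}))"
    by (rule clique_subset[OF first_clique_clique])
  show "w = x \<or> E x w" if "E u w" for w
    using first_clique_domination[OF u(1) _ r that] T(2) x by (meson subsetD)
qed

lemma pull_second_vertex:
  assumes P: "triangle_packing V E P" and T: "T \<in> P" "T \<subseteq> Cs ! 0" "a \<in> T"
    and b: "b \<in> Cs ! 0" and bc: "rmax Cs b \<le> rmax Cs c"
    and rest: "\<forall>v\<in>Cs ! 0 - {a, b, c}. rmax Cs c \<le> rmax Cs v"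
  shows "\<exists>P1 T1. triangle_packing V E P1 \<and> card P1 = card P \<and> T1 \<in> P1
           \<and> T1 \<subseteq> Cs ! 0 \<and> a \<in> T1 \<and> b \<in> T1"
proof (cases "b \<in> T")
  case True
  then show ?thesis using P T by blast
next
  case False
  have "card T = 3" using P T(1) unfolding triangle_packing_def is_triangle_def by blast
  then obtain x where x: "x \<in> T" "x \<noteq> a" "x \<noteq> c" using card3_avoids_two[of T a c] by blast
  then have "x \<in> Cs ! 0 - {a, b, c}" using T(2) False by auto
  then have "rmax Cs c \<le> rmax Cs x" using rest by blast
  then have "rmax Cs b \<le> rmax Cs x" using bc by (rule le_trans[rotated])
  then obtain P1 where "triangle_packing V E P1" "card P1 = card P" "insert b (T - {x}) \<in> P1"
    using exchange_in_first_clique[OF P T(1,2) x(1) b False] by blast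
  moreover have "insert b (T - {x}) \<subseteq> Cs ! 0" "a \<in> insert b (T - {x})" using T b x by auto
  ultimately show ?thesis by blast
qed

lemma complete_triangle:
  assumes P: "triangle_packing V E P" and T: "T \<in> P" "T \<subseteq> Cs ! 0" "a \<in> T" "b \<in> T"
    and c: "c \<in> Cs ! 0" and distinct: "a \<noteq> b" "a \<noteq> c" "b \<noteq> c"
    and rest: "\<forall>v\<in>Cs ! 0 - {a, b, c}. rmax Cs c \<le> rmax Cs v"
  shows "\<exists>P'. triangle_packing V E P' \<and> card P' = card P \<and> {a, b, c} \<in> P'"
proof -
  have card: "card T = 3" using P T(1) unfolding triangle_packing_def is_triangle_def by blast
  show ?thesis
  proof (cases "c \<in> T")
    case True
    then have "T = {a, b, c}" using card3_eq[OF card] T distinct by simp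
    then show ?thesis using P T(1) by blast
  next
    case False
    obtain y where y: "y \<in> T" "y \<noteq> a" "y \<noteq> b" using card3_avoids_two[OF card] by blast
    then have "T = {a, b, y}" using card3_eq[OF card] T distinct(1) by simp
    then have new: "insert c (T - {y}) = {a, b, c}" using y by auto
    have "rmax Cs c \<le> rmax Cs y" using rest T(2) y False by blast
    then show ?thesis
      using exchange_in_first_clique[OF P T(1,2) y(1) c False] new by simp
  qed
qed

end

theorem mainTheorem4:
  fixes V :: "'a set" and E :: "'a \<Rightarrow> 'a \<Rightarrow> bool" and Cs :: "'a set list"
    and \<alpha> \<beta> \<gamma> :: 'a and P :: "'a set set"
  assumes "interval_graph V E"
    and "consecutive_clique_arrangement V E Cs"
    and "Cs \<noteq> []" and "card (Cs ! 0) \<ge> 3"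
    and "\<alpha> \<in> Cs ! 0" and "\<beta> \<in> Cs ! 0" and "\<gamma> \<in> Cs ! 0"
    and "\<alpha> \<noteq> \<beta>" and "\<alpha> \<noteq> \<gamma>" and "\<beta> \<noteq> \<gamma>"
    and "rmax Cs \<alpha> \<le> rmax Cs \<beta>" and "rmax Cs \<beta> \<le> rmax Cs \<gamma>"
    and "\<forall>v\<in>Cs ! 0 - {\<alpha>, \<beta>, \<gamma>}. rmax Cs \<gamma> \<le> rmax Cs v"
    and "triangle_packing V E P"
    and "\<exists>T\<in>P. \<alpha> \<in> T"
  shows "\<exists>P'. triangle_packing V E P' \<and> card P' = card P \<and> {\<alpha>, \<beta>, \<gamma>} \<in> P'"
proof -
  interpret clique_arrangement V E Cs
    using assms(1-3) by unfold_locales (simp_all add: interval_graph_def)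
  have alpha_least: "rmax Cs \<alpha> \<le> rmax Cs v" if v: "v \<in> Cs ! 0" for v
  proof (cases "v \<in> {\<alpha>, \<beta>, \<gamma>}")
    case True
    then show ?thesis using assms(11,12) by auto
  next
    case False
    then have "rmax Cs \<gamma> \<le> rmax Cs v" using v assms(13) by blast
    then show ?thesis using assms(11,12) by linarith
  qed
  have alpha_private: "rmax Cs \<alpha> = 0"
    using assms(5) alpha_least by (rule least_rmax_private)
  obtain T where T: "T \<in> P" "\<alpha> \<in> T" using assms(15) by blast
  have "is_triangle V E T" using assms(14) T(1) unfolding triangle_packing_def by blast
  then have "T \<subseteq> Cs ! 0"
    using T(2) assms(5) alpha_private by (rule triangle_through_private_vertex)
  then obtain P1 T1 where P1: "triangle_packing V E P1" "card P1 = card P"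
      and T1: "T1 \<in> P1" "T1 \<subseteq> Cs ! 0" "\<alpha> \<in> T1" "\<beta> \<in> T1"
    using pull_second_vertex[OF assms(14) T(1) _ T(2) assms(6,12,13)] by blast
  then show ?thesis
    using complete_triangle[OF P1(1) T1 assms(7-10,13)] P1(2) by simp
qed

end
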